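(* Let $A=\mathrm{diag}(2,3,5)$ and $B=(1,2,1)$, and let $\mathrm{NT}=\{(x_1,x_2,x_3)\in\mathbb{R}^3 : BA^k(x_1,x_2,x_3)^T\ge 0 \text{ for all integers } k\ge 0\}=\{\vec{x}: 2^kx_1+2\cdot 3^kx_2+5^kx_3\ge 0\ \forall k\ge 0\}$, the non-termination set of the loop "while $(x_1+2x_2+x_3\ge 0)$ $\{(x_1,x_2,x_3):=(2x_1,3x_2,5x_3)\}$". Then $\mathrm{NT}$ is not a semi-algebraic set.
   Context: A semi-algebraic subset of $\mathbb{R}^n$ is a set of the form $\bigcup_{i=1}^s\bigcap_{j=1}^{r_i}\{\vec{x}\in\mathbb{R}^n: f_{i,j}(\vec{x})\,\triangleleft_{i,j}\,0\}$ with finitely many polynomials $f_{i,j}\in\mathbb{R}[x_1,\dots,x_n]$ and $\triangleleft_{i,j}\in\{<,=\}$. *)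

theory Defs
  imports "HOL-Analysis.Analysis"
begin

definition poly_fun3 :: "(real^3 \<Rightarrow> real) \<Rightarrow> bool" where
  "poly_fun3 f \<longleftrightarrow> (\<exists>(c :: nat \<Rightarrow> nat \<Rightarrow> nat \<Rightarrow> real) (N :: nat).
     \<forall>x. f x = (\<Sum>i\<le>N. \<Sum>j\<le>N. \<Sum>k\<le>N. c i j k * (x$1)^i * (x$2)^j * (x$3)^k))"

datatype sign_rel = Less0 | Eq0

fun holds_rel :: "sign_rel \<Rightarrow> real \<Rightarrow> bool" where
  "holds_rel Less0 v \<longleftrightarrow> v < 0"
| "holds_rel Eq0 v \<longleftrightarrow> v = 0"

definition semialgebraic3 :: "(real^3) set \<Rightarrow> bool" where
  "semialgebraic3 S \<longleftrightarrow> (\<exists>F :: ((real^3 \<Rightarrow> real) \<times> sign_rel) list list.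
     (\<forall>C\<in>set F. \<forall>(f, r)\<in>set C. poly_fun3 f) \<and>
     S = {x. \<exists>C\<in>set F. \<forall>(f, r)\<in>set C. holds_rel r (f x)})"

definition NT :: "(real^3) set" where
  "NT = {x. \<forall>k::nat. 2^k * x$1 + 2 * 3^k * x$2 + 5^k * x$3 \<ge> (0::real)}"

end

theory Submission
  imports Defs "HOL-Computational_Algebra.Polynomial"
begin

(* The guard values along the orbit of x are v_m(x) = 2^m x1 + 2 3^m x2 + 5^m x3, and
   NT = {x. \<forall>m. v_m(x) \<ge> 0}.  The points q_k = (1, -3/4 (2/3)^k, 1/2 (2/5)^k) lie in NT,
   and v_k, v_(k+1) both vanish at q_k; hence the segment [q_k, q_(k+1)] lies in NT, while
   moving from any of its points downwards in x3 leaves NT (v_(k+1) becomes negative).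
   Nonnegativity of all v_m(q_k) reduces to the elementary inequality 3 y^n \<le> 2 a^n + b^n
   for y between a and b with 3 y \<le> 2 a + b.

   General part: a polynomial vanishing at infinitely many points of a line vanishes on
   the whole line, and for a semi-algebraic set S there is a finite set of polynomials
   such that at every point p of S which S leaves in direction -d, one of them vanishes
   at p without vanishing on the line p + t d (otherwise all signs, hence membership in S,
   would persist a little beyond p).

   Applied to NT: for each k one of finitely many polynomials f vanishes on the whole
   line through q_k, q_(k+1) but not on some vertical line through it; by pigeonhole a
   single f does so for infinitely many k.  A vertical line {(1, c, z)} meets these
   lines at infinitely many distinct heights, so f vanishes on every such vertical line,
   a contradiction. *)

section \<open>Polynomial functions along lines\<close>

lemma poly_fun3_on_line:
  assumes "poly_fun3 f"
  obtains P where "\<And>t. f (a + t *\<^sub>R b) = poly P t"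
proof -
  obtain c N where f: "\<And>x. f x = (\<Sum>i\<le>N. \<Sum>j\<le>N. \<Sum>k\<le>N. c i j k * (x$1)^i * (x$2)^j * (x$3)^k)"
    using assms unfolding poly_fun3_def by blast
  define P where "P = (\<Sum>i\<le>N. \<Sum>j\<le>N. \<Sum>k\<le>N. smult (c i j k)
      ([:a$1, b$1:]^i * [:a$2, b$2:]^j * [:a$3, b$3:]^k))"
  have "f (a + t *\<^sub>R b) = poly P t" for t
    by (simp add: f P_def poly_sum mult.assoc algebra_simps)
  then show thesis by (rule that)
qed

lemma poly_fun3_line_vanishes:
  assumes "poly_fun3 f" and "infinite {t. f (a + t *\<^sub>R b) = 0}"
  shows "f (a + t *\<^sub>R b) = 0"
proof -
  obtain P where P: "\<And>t. f (a + t *\<^sub>R b) = poly P t"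
    using poly_fun3_on_line[OF assms(1)] by blast
  have "P = 0"
    using assms(2) poly_roots_finite[of P] by (auto simp: P)
  then show ?thesis by (simp add: P)
qed

lemma poly_fun3_sign_persists:
  assumes "poly_fun3 f" and "f p \<noteq> 0 \<or> (\<forall>t. f (p + t *\<^sub>R d) = 0)"
  shows "eventually (\<lambda>t. sgn (f (p + t *\<^sub>R d)) = sgn (f p)) (at 0)"
proof (cases "\<forall>t. f (p + t *\<^sub>R d) = 0")
  case True
  then have "f p = 0" by (metis add.right_neutral scale_zero_left)
  then show ?thesis using True by simp
next
  case False
  with assms(2) have nonzero: "f p \<noteq> 0" by blast
  obtain P where P: "\<And>t. f (p + t *\<^sub>R d) = poly P t"
    using poly_fun3_on_line[OF assms(1)] by blast
  have "((\<lambda>t. poly P t) \<longlongrightarrow> poly P 0) (at 0)"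
    using poly_isCont[of 0 P] by (simp add: isCont_def)
  moreover have "poly P 0 = f p" using P[of 0] by simp
  ultimately have "((\<lambda>t. f (p + t *\<^sub>R d)) \<longlongrightarrow> f p) (at 0)" by (simp add: P)
  then have "eventually (\<lambda>t. dist (f (p + t *\<^sub>R d)) (f p) < \<bar>f p\<bar>) (at 0)"
    using nonzero by (simp add: tendstoD)
  then show ?thesis
    by eventually_elim (auto simp: sgn_if dist_real_def abs_if split: if_splits)
qed

section \<open>Boundary points of semi-algebraic sets\<close>

lemma holds_rel_sgn: "sgn v = sgn w \<Longrightarrow> holds_rel r v = holds_rel r (w::real)"
  by (cases r) (auto simp: sgn_if split: if_splits)

lemma semialgebraic3_boundary_polys:
  assumes "semialgebraic3 S"
  obtains PF where "finite PF" and "\<And>f. f \<in> PF \<Longrightarrow> poly_fun3 f"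
    and "\<And>p d. p \<in> S \<Longrightarrow> (\<forall>t>0. p - t *\<^sub>R d \<notin> S) \<Longrightarrow>
           \<exists>f\<in>PF. f p = 0 \<and> \<not> (\<forall>t. f (p + t *\<^sub>R d) = 0)"
proof -
  obtain F where polys: "\<forall>C\<in>set F. \<forall>(f, r)\<in>set C. poly_fun3 f"
    and S: "S = {x. \<exists>C\<in>set F. \<forall>(f, r)\<in>set C. holds_rel r (f x)}"
    using assms unfolding semialgebraic3_def by blast
  define PF where "PF = (\<Union>C\<in>set F. fst ` set C)"
  have "finite PF" unfolding PF_def by simp
  moreover have poly: "poly_fun3 f" if "f \<in> PF" for f
    using that polys unfolding PF_def by fastforce
  moreover have "\<exists>f\<in>PF. f p = 0 \<and> \<not> (\<forall>t. f (p + t *\<^sub>R d) = 0)"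
    if p: "p \<in> S" and leaves: "\<forall>t>0. p - t *\<^sub>R d \<notin> S" for p d
  proof (rule ccontr)
    assume "\<not> ?thesis"
    then have "\<forall>f\<in>PF. eventually (\<lambda>t. sgn (f (p + t *\<^sub>R d)) = sgn (f p)) (at 0)"
      using poly poly_fun3_sign_persists by blast
    then have "eventually (\<lambda>t. \<forall>f\<in>PF. sgn (f (p + t *\<^sub>R d)) = sgn (f p)) (at 0)"
      using \<open>finite PF\<close> by (simp add: eventually_ball_finite)
    then obtain e :: real where "e > 0"
      and signs: "\<And>t. t \<noteq> 0 \<Longrightarrow> \<bar>t\<bar> < e \<Longrightarrow> \<forall>f\<in>PF. sgn (f (p + t *\<^sub>R d)) = sgn (f p)"
      unfolding eventually_at by (auto simp: dist_real_def)
    define t where "t = e / 2"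
    have "t > 0" and signs_t: "\<And>f. f \<in> PF \<Longrightarrow> sgn (f (p - t *\<^sub>R d)) = sgn (f p)"
      using \<open>e > 0\<close> signs[of "-t"] by (auto simp: t_def)
    obtain C where C: "C \<in> set F" and holds: "\<forall>(f, r)\<in>set C. holds_rel r (f p)"
      using p S by auto
    have "holds_rel r (f (p - t *\<^sub>R d))" if "(f, r) \<in> set C" for f r
    proof -
      have "f \<in> PF" using C that unfolding PF_def by force
      then show ?thesis
        using holds that holds_rel_sgn[OF signs_t, of f r] by auto
    qed
    with C have "p - t *\<^sub>R d \<in> S" unfolding S by blast
    with leaves \<open>t > 0\<close> show False by blast
  qed
  ultimately show thesis by (rule that)
qed

text \<open>If y lies between a and b and 3y \<le> 2a + b, then 3y^n \<le> 2a^n + b^n; the induction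
  step uses that the larger of a, b also has the larger n-th power.\<close>
lemma weighted_power_mean_le:
  fixes a b y :: real
  assumes "0 \<le> a" "0 \<le> b" "min a b \<le> y" "y \<le> max a b" "3 * y \<le> 2 * a + b"
  shows "3 * y ^ n \<le> 2 * a ^ n + b ^ n"
proof (induction n)
  case 0
  then show ?case by simp
next
  case (Suc n)
  have "0 \<le> y" using assms by linarith
  have step: "(2 * a ^ n + b ^ n) * y \<le> 2 * a ^ Suc n + b ^ Suc n"
  proof (cases "a \<le> b")
    case True
    then have "a ^ n * (b - y) \<le> b ^ n * (b - y)"
      using assms by (intro mult_right_mono power_mono) auto
    moreover have "0 \<le> a ^ n * (2 * a + b - 3 * y)"
      using assms by simp
    ultimately show ?thesis by (simp add: algebra_simps)
  next
    case False
    then have "b ^ n * (a - y) \<le> a ^ n * (a - y)"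
      using assms by (intro mult_right_mono power_mono) auto
    moreover have "0 \<le> b ^ n * (2 * a + b - 3 * y)"
      using assms by simp
    ultimately show ?thesis by (simp add: algebra_simps)
  qed
  have "3 * y ^ Suc n = (3 * y ^ n) * y" by simp
  also have "\<dots> \<le> (2 * a ^ n + b ^ n) * y"
    using Suc.IH \<open>0 \<le> y\<close> by (rule mult_right_mono)
  also have "\<dots> \<le> 2 * a ^ Suc n + b ^ Suc n" by (rule step)
  finally show ?case .
qed

definition guard :: "nat \<Rightarrow> real^3 \<Rightarrow> real" where
  "guard m x = 2^m * x$1 + 2 * 3^m * x$2 + 5^m * x$3"

lemma NT_iff_guard: "x \<in> NT \<longleftrightarrow> (\<forall>m. 0 \<le> guard m x)"
  by (simp add: NT_def guard_def)

lemma guard_linear: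
  "guard m (x + y) = guard m x + guard m y"
  "guard m (x - y) = guard m x - guard m y"
  "guard m (c *\<^sub>R x) = c * guard m x"
  by (simp_all add: guard_def algebra_simps)

definition e3 :: "real^3" where "e3 = vector [0, 0, 1]"

lemma guard_e3: "guard m e3 = 5^m"
  by (simp add: guard_def e3_def)

definition corner :: "nat \<Rightarrow> real^3" where
  "corner k = vector [1, -(3/4) * (2/3)^k, (1/2) * (2/5)^k]"

lemma guard_corner_scaled:
  "2 * 15^k * guard m (corner k) = 2 * (2^m * 15^k) - 3 * (3^m * 10^k) + 5^m * (6::real)^k"
proof -
  have "(15::real)^k * (2/3)^k = 10^k" "(15::real)^k * (2/5)^k = 6^k"
    by (simp_all add: power_mult_distrib[symmetric])
  then show ?thesis
    by (simp add: guard_def corner_def algebra_simps)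
qed

text \<open>Splitting powers of composite bases into powers of 2, 3, 5 lets the ring normaliser
  compare the monomials occurring in the guard values.\<close>
lemma power_factorizations:
  "(6::real)^n = 2^n * 3^n" "(10::real)^n = 2^n * 5^n"
  "(15::real)^n = 3^n * 5^n" "(30::real)^n = 2^n * 3^n * 5^n"
  by (simp_all add: power_mult_distrib[symmetric])

text \<open>All guard values at q_k are nonnegative, by the power-mean inequality applied to
  the exponents on either side of k.\<close>
lemma guard_corner_nonneg: "0 \<le> guard m (corner k)"
proof -
  have key: "3 * (3^m * 10^k) \<le> 2 * (2^m * 15^k) + 5^m * (6::real)^k"
  proof (cases "k \<le> m")
    case True
    then obtain u where m: "m = k + u" using le_Suc_ex by blast
    have "3 * (3::real)^u \<le> 2 * 2^u + 5^u"
      by (rule weighted_power_mean_le) auto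
    then have "30^k * (3 * (3::real)^u) \<le> 30^k * (2 * 2^u + 5^u)"
      by (rule mult_left_mono) simp
    moreover have "3 * (3^m * 10^k) = 30^k * (3 * (3::real)^u)"
      "2 * (2^m * 15^k) + 5^m * 6^k = 30^k * (2 * 2^u + (5::real)^u)"
      by (simp_all add: m power_add power_factorizations algebra_simps)
    ultimately show ?thesis by simp
  next
    case False
    then obtain w where k: "k = m + w" using le_Suc_ex[of m k] by auto
    have "3 * (10::real)^w \<le> 2 * 15^w + 6^w"
      by (rule weighted_power_mean_le) auto
    then have "30^m * (3 * (10::real)^w) \<le> 30^m * (2 * 15^w + 6^w)"
      by (rule mult_left_mono) simp
    moreover have "3 * (3^m * 10^k) = 30^m * (3 * (10::real)^w)"
      "2 * (2^m * 15^k) + 5^m * 6^k = 30^m * (2 * 15^w + (6::real)^w)"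
      by (simp_all add: k power_add power_factorizations algebra_simps)
    ultimately show ?thesis by simp
  qed
  then have "0 \<le> 2 * 15^k * guard m (corner k)"
    unfolding guard_corner_scaled by simp
  then show ?thesis
    using mult_le_cancel_left_pos[of "2 * 15^k" 0 "guard m (corner k)"] by simp
qed

lemma guard_corner_zero: "guard k (corner k) = 0" "guard (Suc k) (corner k) = 0"
  using guard_corner_scaled[of k k] guard_corner_scaled[of k "Suc k"]
  by (simp_all add: power_factorizations algebra_simps)

section \<open>The segments [q_k, q_(k+1)] on the boundary of NT\<close>

definition seg :: "nat \<Rightarrow> real \<Rightarrow> real^3" where
  "seg k s = corner k + s *\<^sub>R (corner (Suc k) - corner k)"

lemma guard_seg: "guard m (seg k s) = (1 - s) * guard m (corner k) + s * guard m (corner (Suc k))"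
  by (simp add: seg_def guard_linear algebra_simps)

lemma seg_in_NT: "0 \<le> s \<Longrightarrow> s \<le> 1 \<Longrightarrow> seg k s \<in> NT"
  unfolding NT_iff_guard guard_seg using guard_corner_nonneg by simp

text \<open>The guard of iteration k+1 vanishes on the whole line, so moving down in x3 leaves NT.\<close>
lemma guard_seg_zero: "guard (Suc k) (seg k s) = 0"
  by (simp add: guard_seg guard_corner_zero)

lemma seg_below_not_NT: "0 < t \<Longrightarrow> seg k s - t *\<^sub>R e3 \<notin> NT"
  unfolding NT_iff_guard using guard_seg_zero[of k s]
  by (auto simp: guard_linear guard_e3 not_le intro!: exI[of _ "Suc k"])

lemma seg_witness_poly:
  assumes "finite PF" and poly: "\<And>f. f \<in> PF \<Longrightarrow> poly_fun3 f"
    and boundary: "\<And>p. p \<in> NT \<Longrightarrow> (\<forall>t>0. p - t *\<^sub>R e3 \<notin> NT) \<Longrightarrow>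
           \<exists>f\<in>PF. f p = 0 \<and> \<not> (\<forall>t. f (p + t *\<^sub>R e3) = 0)"
  shows "\<exists>f\<in>PF. (\<forall>s. f (seg k s) = 0) \<and> (\<exists>s. \<not> (\<forall>t. f (seg k s + t *\<^sub>R e3) = 0))"
proof -
  have "\<forall>s\<in>{0..1}. \<exists>f\<in>PF. f (seg k s) = 0 \<and> \<not> (\<forall>t. f (seg k s + t *\<^sub>R e3) = 0)"
    using boundary seg_in_NT seg_below_not_NT by simp
  from pigeonhole_infinite_rel[OF infinite_Icc[OF zero_less_one] \<open>finite PF\<close> this]
  obtain f where "f \<in> PF"
    and many: "infinite {s \<in> {0..1}. f (seg k s) = 0 \<and> \<not> (\<forall>t. f (seg k s + t *\<^sub>R e3) = 0)}"
    by blast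
  have "infinite {s. f (seg k s) = 0}"
    by (rule infinite_super[OF _ many]) auto
  then have "\<forall>s. f (seg k s) = 0"
    unfolding seg_def using poly_fun3_line_vanishes[OF poly[OF \<open>f \<in> PF\<close>]] by blast
  moreover obtain s where "\<not> (\<forall>t. f (seg k s + t *\<^sub>R e3) = 0)"
    using many not_finite_existsD by blast
  ultimately show ?thesis using \<open>f \<in> PF\<close> by blast
qed

text \<open>The height at which the vertical line over (1, c) meets the plane guard m = 0.\<close>
definition level :: "real \<Rightarrow> nat \<Rightarrow> real" where
  "level c m = - (2^m + 2 * 3^m * c) / 5^m"

lemma guard_column_zero: "guard m (vector [1, c, z]) = 0 \<longleftrightarrow> z = level c m"
  by (auto simp: guard_def level_def field_simps)

lemma seg_meets_column: "\<exists>s. seg k s = vector [1, c, level c (Suc k)]"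
proof -
  define y where "y j = corner j $ 2" for j
  have y_step: "y (Suc k) - y k \<noteq> 0" by (simp add: y_def corner_def)
  define s where "s = (c - y k) / (y (Suc k) - y k)"
  have "seg k s $ 1 = 1" by (simp add: seg_def corner_def)
  moreover have "seg k s $ 2 = c"
    using y_step by (simp add: seg_def s_def y_def)
  ultimately have eq: "seg k s = vector [1, c, seg k s $ 3]"
    by (simp add: vec_eq_iff forall_3)
  have "guard (Suc k) (vector [1, c, seg k s $ 3]) = 0"
    using guard_seg_zero[of k s] by (simp only: eq[symmetric])
  then have "seg k s $ 3 = level c (Suc k)"
    by (simp only: guard_column_zero)
  with eq show ?thesis by auto
qed

text \<open>Each height is attained for at most finitely many m: for nonzero heights the
  value grows like (5/3)^m, and height zero forces (2/3)^m = -2c.\<close>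
lemma level_finite_fibres: "finite {m. level c m = v}"
proof (cases "v = 0")
  case True
  have "inj (\<lambda>m. (2/3 :: real)^m)"
  proof (rule linorder_injI)
    fix x y :: nat
    assume "x < y"
    then have "(2/3 :: real)^y < (2/3)^x" by (rule power_strict_decreasing) auto
    then show "(2/3 :: real)^x \<noteq> (2/3)^y" by linarith
  qed
  then have "finite ((\<lambda>m. (2/3 :: real)^m) -` {-2 * c})"
    by (intro finite_vimageI) simp_all
  moreover have "{m. level c m = v} \<subseteq> (\<lambda>m. (2/3 :: real)^m) -` {-2 * c}"
    using True by (auto simp: level_def power_divide field_simps add_eq_0_iff2)
  ultimately show ?thesis by (rule finite_subset[rotated])
next
  case False
  obtain N where N: "(1 + 2 * \<bar>c\<bar>) / \<bar>v\<bar> < (5/3 :: real)^N"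
    using real_arch_pow[of "5/3"] by auto
  have "m < N" if "level c m = v" for m
  proof (rule ccontr)
    assume "\<not> m < N"
    then have "(5/3 :: real)^N \<le> (5/3)^m" by (intro power_increasing) auto
    with N have "(1 + 2 * \<bar>c\<bar>) / \<bar>v\<bar> < 5^m / 3^m"
      by (simp add: power_divide)
    have "2^m + 2 * 3^m * c = - v * 5^m"
      using that by (simp add: level_def field_simps)
    then have abs_value: "\<bar>v\<bar> * 5^m = \<bar>2^m + 2 * 3^m * c\<bar>"
      by (simp add: abs_mult)
    have "(1 + 2 * \<bar>c\<bar>) * 3^m < \<bar>v\<bar> * 5^m"
      using \<open>(1 + 2 * \<bar>c\<bar>) / \<bar>v\<bar> < 5^m / 3^m\<close> False by (simp add: field_simps)
    also have "\<dots> = \<bar>2^m + 2 * 3^m * c\<bar>" by (rule abs_value)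
    also have "\<dots> \<le> 2^m + 2 * 3^m * \<bar>c\<bar>"
      by (simp add: abs_mult abs_triangle_ineq[THEN order_trans])
    also have "\<dots> \<le> (1 + 2 * \<bar>c\<bar>) * 3^m"
      using power_mono[of "2::real" 3 m] by (simp add: distrib_right)
    finally show False by simp
  qed
  then have "{m. level c m = v} \<subseteq> {..<N}" by auto
  then show ?thesis by (rule finite_subset) simp
qed

lemma column_vanishes:
  assumes "poly_fun3 f" and "infinite K" and "\<And>k s. k \<in> K \<Longrightarrow> f (seg k s) = 0"
  shows "f (vector [1, c, z]) = 0"
proof -
  define base :: "real^3" where "base = vector [1, c, 0]"
  have column: "vector [1, c, h] = base + h *\<^sub>R e3" for h :: real
    by (simp add: base_def vec_eq_iff forall_3 e3_def)
  have "infinite (Suc ` K)"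
    using assms(2) by (simp add: finite_image_iff)
  have "infinite (level c ` Suc ` K)"
  proof
    assume "finite (level c ` Suc ` K)"
    then have "finite (\<Union>v\<in>level c ` Suc ` K. {m. level c m = v})"
      using level_finite_fibres by blast
    moreover have "Suc ` K \<subseteq> (\<Union>v\<in>level c ` Suc ` K. {m. level c m = v})" by auto
    ultimately show False
      using \<open>infinite (Suc ` K)\<close> finite_subset by blast
  qed
  moreover have "level c ` Suc ` K \<subseteq> {h. f (base + h *\<^sub>R e3) = 0}"
  proof
    fix h assume "h \<in> level c ` Suc ` K"
    then obtain k where "k \<in> K" and h: "h = level c (Suc k)" by blast
    obtain s where "seg k s = vector [1, c, h]" using seg_meets_column h by blast
    then show "h \<in> {h. f (base + h *\<^sub>R e3) = 0}"
      using assms(3)[OF \<open>k \<in> K\<close>, of s] by (simp add: column)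
  qed
  ultimately have "infinite {h. f (base + h *\<^sub>R e3) = 0}"
    using infinite_super by blast
  then show ?thesis
    using poly_fun3_line_vanishes[OF assms(1)] by (simp add: column)
qed

theorem proposition3:
  shows "\<not> semialgebraic3 NT"
proof
  assume "semialgebraic3 NT"
  obtain PF where "finite PF" and poly: "\<And>f. f \<in> PF \<Longrightarrow> poly_fun3 f"
    and boundary: "\<And>p d. p \<in> NT \<Longrightarrow> (\<forall>t>0. p - t *\<^sub>R d \<notin> NT) \<Longrightarrow>
           \<exists>f\<in>PF. f p = 0 \<and> \<not> (\<forall>t. f (p + t *\<^sub>R d) = 0)"
    using semialgebraic3_boundary_polys[OF \<open>semialgebraic3 NT\<close>] by blast
  have "\<forall>k\<in>UNIV. \<exists>f\<in>PF. (\<forall>s. f (seg k s) = 0) \<and> (\<exists>s. \<not> (\<forall>t. f (seg k s + t *\<^sub>R e3) = 0))"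
    using seg_witness_poly[OF \<open>finite PF\<close> poly boundary] by blast
  from pigeonhole_infinite_rel[OF infinite_UNIV_nat \<open>finite PF\<close> this]
  obtain f where "f \<in> PF"
    and K: "infinite {k. (\<forall>s. f (seg k s) = 0) \<and> (\<exists>s. \<not> (\<forall>t. f (seg k s + t *\<^sub>R e3) = 0))}"
    by auto
  then obtain k s where nonzero: "\<not> (\<forall>t. f (seg k s + t *\<^sub>R e3) = 0)"
    using not_finite_existsD by blast
  have columns: "f (vector [1, c, z]) = 0" for c z
    by (rule column_vanishes[OF poly[OF \<open>f \<in> PF\<close>] K]) simp
  have "seg k s + t *\<^sub>R e3 = vector [1, seg k s $ 2, seg k s $ 3 + t]" for t
    by (simp add: vec_eq_iff forall_3 seg_def corner_def e3_def)
  then have "\<forall>t. f (seg k s + t *\<^sub>R e3) = 0"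
    by (simp only: columns simp_thms)
  with nonzero show False by blast
qed

end
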